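(* Let $n$ be a positive even integer and let $$R=H^{\otimes n}\left(\sum_{x\in\{0,1\}^n}(-1)^{\sum_{i=1}^{n-1}x_ix_{i+1}}|x\rangle\langle x|\right)H^{\otimes n},$$ a $2^n\times 2^n$ real matrix indexed by $\{0,1\}^n$. Then every matrix element of $R$ satisfies $|\langle y|R|z\rangle|=2^{-n/2}$ for all $y,z\in\{0,1\}^n$, and in every row of $R$ there are exactly $\frac12(2^n+2^{n/2})$ positive entries and $\frac12(2^n-2^{n/2})$ negative entries.
   Context: $H=\frac{1}{\sqrt2}\begin{pmatrix}1&1\\1&-1\end{pmatrix}$ is the Hadamard matrix, $H^{\otimes n}$ its $n$-fold tensor power, and $\{|x\rangle : x\in\{0,1\}^n\}$ is the computational basis of $(\mathbb{C}^2)^{\otimes n}$, with $x=x_1x_2\ldots x_n$. *)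

theory Defs
  imports Complex_Main
begin

text \<open>Computational basis states of n qubits: bit strings x = x_1 ... x_n,
  represented as boolean lists of length n (list index i corresponds to x_(i+1)).
  Operators on (C^2)^{tensor n} are represented by their matrix elements
  (y, z) \<mapsto> <y|A|z> for bit strings y, z.\<close>

definition bitstrings :: "nat \<Rightarrow> bool list set" where
  "bitstrings n = {x. length x = n}"

definition bitnat :: "bool \<Rightarrow> nat" where
  "bitnat b = (if b then 1 else 0)"

definition hadamard :: "bool \<Rightarrow> bool \<Rightarrow> real" where
  "hadamard a b = (-1) ^ (bitnat a * bitnat b) / sqrt 2"

definition hadamard_tensor :: "nat \<Rightarrow> bool list \<Rightarrow> bool list \<Rightarrow> real" where
  "hadamard_tensor n y x = (\<Prod>i<n. hadamard (y ! i) (x ! i))"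

definition op_mult :: "nat \<Rightarrow> (bool list \<Rightarrow> bool list \<Rightarrow> real) \<Rightarrow> (bool list \<Rightarrow> bool list \<Rightarrow> real)
    \<Rightarrow> bool list \<Rightarrow> bool list \<Rightarrow> real" where
  "op_mult n A B y z = (\<Sum>x\<in>bitstrings n. A y x * B x z)"

definition phase_diag :: "nat \<Rightarrow> bool list \<Rightarrow> bool list \<Rightarrow> real" where
  "phase_diag n x x' = (if x = x' then
      (-1) ^ (\<Sum>i\<in>{1..n-1}. bitnat (x ! (i - 1)) * bitnat (x ! i)) else 0)"

definition R_op :: "nat \<Rightarrow> bool list \<Rightarrow> bool list \<Rightarrow> real" where
  "R_op n = op_mult n (op_mult n (hadamard_tensor n) (phase_diag n)) (hadamard_tensor n)"

end

theory Submission
  imports Defs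
begin

text \<open>Let q(x) = x_1 x_2 + ... + x_{n-1} x_n. Expanding both Hadamard layers gives
  <y|R|z> = 2^(-n) S(y xor z), where S(w) = sum_x (-1)^(q(x) + w.x) is the Walsh transform of the
  path phase. Summing out x_1 forces x_2 = w_1, after which summing out x_2 leaves a transform of
  the same kind on x_3 ... x_n, with w_3 flipped by w_1; so S(a b w) = +-2 S(w'). For even n this
  makes every S(w) equal to +-2^(n/2), and the same recursion shows that the signs of S sum to
  2^(n/2), which counts the positive and negative entries of each row.\<close>

definition bool_sign :: "bool \<Rightarrow> real" where
  "bool_sign b = (if b then -1 else 1)"

lemma bool_sign_simps [simp]: "bool_sign True = -1" "bool_sign False = 1"
  by (simp_all add: bool_sign_def)

lemma bool_sign_not [simp]: "bool_sign (\<not> p) = - bool_sign p"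
  by (cases p) simp_all

lemma bool_sign_xor: "bool_sign (p \<noteq> q) = bool_sign p * bool_sign q"
  by (cases p; cases q) simp_all

lemma minus_one_power_bitnat: "(-1::real) ^ (bitnat a * bitnat b) = bool_sign (a \<and> b)"
  by (cases a; cases b) (simp_all add: bitnat_def)

fun path_phase :: "bool list \<Rightarrow> real" where
  "path_phase (a # b # x) = bool_sign (a \<and> b) * path_phase (b # x)"
| "path_phase _ = 1"

fun inner_sign :: "bool list \<Rightarrow> bool list \<Rightarrow> real" where
  "inner_sign (a # w) (b # x) = bool_sign (a \<and> b) * inner_sign w x"
| "inner_sign _ _ = 1"

fun flip_hd :: "bool \<Rightarrow> bool list \<Rightarrow> bool list" where
  "flip_hd a [] = []"
| "flip_hd a (c # w) = (c \<noteq> a) # w"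

fun xor_list :: "bool list \<Rightarrow> bool list \<Rightarrow> bool list" where
  "xor_list (a # y) (b # z) = (a \<noteq> b) # xor_list y z"
| "xor_list _ _ = []"

lemma length_flip_hd [simp]: "length (flip_hd a w) = length w"
  by (cases w) auto

lemma flip_hd_flip_hd [simp]: "flip_hd a (flip_hd a w) = w"
  by (cases w) auto

fun path_sign :: "bool list \<Rightarrow> bool" where
  "path_sign (a # b # w) = ((a \<and> b) \<noteq> path_sign (flip_hd a w))"
| "path_sign _ = False"

lemma length_xor_list [simp]: "length (xor_list y z) = min (length y) (length z)"
  by (induction y z rule: xor_list.induct) auto

lemma xor_list_xor_list: "length y = length z \<Longrightarrow> xor_list y (xor_list y z) = z"
  by (induction y z rule: xor_list.induct) auto

lemma inner_sign_commute: "inner_sign y x = inner_sign x y"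
  by (induction y x rule: inner_sign.induct) (auto simp: conj_commute)

lemma inner_sign_mult:
  "length y = length x \<Longrightarrow> length z = length x \<Longrightarrow>
    inner_sign y x * inner_sign z x = inner_sign (xor_list y z) x"
proof (induction x arbitrary: y z)
  case (Cons b x)
  then obtain a y' c z' where "y = a # y'" "z = c # z'"
    by (cases y; cases z) auto
  with Cons show ?case
    by (cases a; cases b; cases c; simp; metis mult.assoc mult.left_commute)
qed simp

lemma path_phase_inner_sign_flip_hd:
  assumes "length x = length w"
  shows "path_phase (a # x) * inner_sign w x = path_phase x * inner_sign (flip_hd a w) x"
proof (cases x)
  case (Cons d x')
  with assms obtain c w' where "w = c # w'" by (cases w) auto
  with Cons show ?thesis by (cases a; cases c; cases d) simp_all
qed simp

lemma mem_bitstrings [simp]: "x \<in> bitstrings n \<longleftrightarrow> length x = n"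
  by (simp add: bitstrings_def)

lemma bitstrings_eq_lists: "bitstrings n = {xs. set xs \<subseteq> UNIV \<and> length xs = n}"
  by (auto simp: bitstrings_def)

lemma finite_bitstrings [simp]: "finite (bitstrings n)"
  unfolding bitstrings_eq_lists by (rule finite_lists_length_eq) simp

lemma card_bitstrings: "card (bitstrings n) = 2 ^ n"
  unfolding bitstrings_eq_lists by (subst card_lists_length_eq) (simp_all add: card_UNIV_bool)

lemma bitstrings_0: "bitstrings 0 = {[]}"
  by (auto simp: bitstrings_def)

lemma sum_bitstrings_Suc:
  "(\<Sum>x\<in>bitstrings (Suc n). f x) = (\<Sum>x\<in>bitstrings n. f (True # x) + f (False # x))"
proof -
  have "bitstrings (Suc n) = Cons True ` bitstrings n \<union> Cons False ` bitstrings n"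
    by (auto simp: bitstrings_def length_Suc_conv)
  then have "(\<Sum>x\<in>bitstrings (Suc n). f x)
      = sum f (Cons True ` bitstrings n) + sum f (Cons False ` bitstrings n)"
    by (simp only:) (rule sum.union_disjoint; auto)
  then show ?thesis
    by (simp add: sum.reindex sum.distrib)
qed

lemma sum_bitstrings_Suc_Suc:
  "(\<Sum>x\<in>bitstrings (Suc (Suc n)). f x) = (\<Sum>v\<in>bitstrings n.
     f (True # True # v) + f (True # False # v) + f (False # True # v) + f (False # False # v))"
  by (simp add: sum_bitstrings_Suc sum.distrib add.assoc)

lemma bij_betw_flip_hd: "bij_betw (flip_hd a) (bitstrings n) (bitstrings n)"
  by (rule bij_betw_byWitness[where f' = "flip_hd a"]) auto

lemma card_xor_list_translate:
  assumes "length y = n"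
  shows "card {z\<in>bitstrings n. P (xor_list y z)} = card {w\<in>bitstrings n. P w}"
  by (rule bij_betw_same_card[OF bij_betw_byWitness[where f = "xor_list y" and f' = "xor_list y"]])
    (use assms in \<open>auto simp: xor_list_xor_list\<close>)

definition walsh_path :: "bool list \<Rightarrow> real" where
  "walsh_path w = (\<Sum>x\<in>bitstrings (length w). path_phase x * inner_sign w x)"

lemma walsh_path_Cons_Cons:
  "walsh_path (a # b # w) = 2 * bool_sign (a \<and> b) * walsh_path (flip_hd a w)"
proof -
  have "walsh_path (a # b # w)
      = (\<Sum>v\<in>bitstrings (length w). 2 * bool_sign (a \<and> b) * (path_phase (a # v) * inner_sign w v))"
    unfolding walsh_path_def length_Cons sum_bitstrings_Suc_Suc
    by (rule sum.cong) (auto, (cases a; cases b; simp))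
  also have "\<dots> = (\<Sum>v\<in>bitstrings (length w).
      2 * bool_sign (a \<and> b) * (path_phase v * inner_sign (flip_hd a w) v))"
    by (rule sum.cong) (simp_all add: path_phase_inner_sign_flip_hd)
  finally show ?thesis
    by (simp add: walsh_path_def sum_distrib_left)
qed

lemma walsh_path_even_length:
  "even (length w) \<Longrightarrow> walsh_path w = bool_sign (path_sign w) * 2 ^ (length w div 2)"
proof (induction w rule: path_sign.induct)
  case (1 a b w)
  then have "walsh_path (flip_hd a w) = bool_sign (path_sign (flip_hd a w)) * 2 ^ (length w div 2)"
    by simp
  then show ?case
    by (cases a; cases b) (simp_all add: walsh_path_Cons_Cons bool_sign_def)
qed (simp_all add: walsh_path_def bitstrings_0)

lemma sum_bool_sign_path_sign: "(\<Sum>w\<in>bitstrings (2 * k). bool_sign (path_sign w)) = 2 ^ k"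
proof (induction k)
  case 0
  then show ?case by (simp add: bitstrings_0)
next
  case (Suc k)
  have flipped: "(\<Sum>v\<in>bitstrings (2 * k). bool_sign (path_sign (flip_hd a v))) = 2 ^ k" for a
    using sum.reindex_bij_betw[OF bij_betw_flip_hd, of "\<lambda>v. bool_sign (path_sign v)"] Suc.IH
    by simp
  \<comment> \<open>The two strings starting with \<open>True\<close> cancel; the two starting with \<open>False\<close> agree.\<close>
  have "(\<Sum>w\<in>bitstrings (2 * Suc k). bool_sign (path_sign w))
      = (\<Sum>v\<in>bitstrings (2 * k). 2 * bool_sign (path_sign (flip_hd False v)))"
    unfolding mult_Suc_right add_2_eq_Suc sum_bitstrings_Suc_Suc
    by (simp add: bool_sign_xor)
  also have "\<dots> = 2 * 2 ^ k"
    by (simp add: sum_distrib_left[symmetric] flipped)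
  finally show ?case by simp
qed

lemma card_path_sign:
  "real (card {w\<in>bitstrings (2 * k). \<not> path_sign w}) = (2 ^ (2 * k) + 2 ^ k) / 2"
  "real (card {w\<in>bitstrings (2 * k). path_sign w}) = (2 ^ (2 * k) - 2 ^ k) / 2"
proof -
  let ?B = "bitstrings (2 * k)"
  let ?P = "real (card {w\<in>?B. \<not> path_sign w})" and ?N = "real (card {w\<in>?B. path_sign w})"
  have card_eq: "real (card {w\<in>?B. Q w}) = (\<Sum>w\<in>?B. if Q w then 1 else 0)" for Q
    by (simp add: sum.inter_filter[symmetric])
  have "?P + ?N = (\<Sum>w\<in>?B. 1)"
    unfolding card_eq sum.distrib[symmetric] by (rule sum.cong) simp_all
  then have "?P + ?N = 2 ^ (2 * k)"
    by (simp add: card_bitstrings)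
  moreover have "?P - ?N = 2 ^ k"
    unfolding card_eq sum_subtractf[symmetric] sum_bool_sign_path_sign[symmetric]
    by (rule sum.cong) (simp_all add: bool_sign_def)
  ultimately show "?P = (2 ^ (2 * k) + 2 ^ k) / 2" "?N = (2 ^ (2 * k) - 2 ^ k) / 2"
    by simp_all
qed

lemma hadamard_tensor_eq:
  assumes "length y = n" and "length x = n"
  shows "hadamard_tensor n y x = inner_sign y x / sqrt 2 ^ n"
proof -
  have "hadamard_tensor (length x) y x = inner_sign y x / sqrt 2 ^ length x"
    if "length y = length x" for y x
    using that
  proof (induction x arbitrary: y)
    case (Cons b x)
    then obtain a y' where y: "y = a # y'" by (cases y) auto
    with Cons have "hadamard_tensor (length x) y' x = inner_sign y' x / sqrt 2 ^ length x"
      by simp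
    then show ?case
      unfolding y hadamard_tensor_def
      by (simp add: prod.lessThan_Suc_shift hadamard_def minus_one_power_bitnat
          del: prod.lessThan_Suc)
  qed (simp add: hadamard_tensor_def)
  from this[of y x] assms show ?thesis by simp
qed

lemma minus_one_power_path_sum:
  "(-1::real) ^ (\<Sum>i\<in>{1..length x - 1}. bitnat (x ! (i - 1)) * bitnat (x ! i)) = path_phase x"
proof (induction x rule: path_phase.induct)
  case (1 a b x)
  let ?f = "\<lambda>i. bitnat ((a # b # x) ! (i - 1)) * bitnat ((a # b # x) ! i)"
  have "(\<Sum>i\<in>{1..length (a # b # x) - 1}. ?f i) = (\<Sum>i=0..length x. ?f (Suc i))"
    using sum.shift_bounds_cl_Suc_ivl[of ?f 0 "length x"] by simp
  also have "\<dots> = ?f 1 + (\<Sum>i=1..length x. ?f (Suc i))"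
    by (simp add: sum.atLeast_Suc_atMost)
  also have "(\<Sum>i=1..length x. ?f (Suc i))
      = (\<Sum>i\<in>{1..length (b # x) - 1}. bitnat ((b # x) ! (i - 1)) * bitnat ((b # x) ! i))"
    by (rule sum.cong) (auto simp: nth_Cons')
  finally show ?case
    using 1 by (simp add: power_add minus_one_power_bitnat)
qed simp_all

lemma R_op_eq_walsh_path:
  assumes y: "length y = n" and z: "length z = n"
  shows "R_op n y z = walsh_path (xor_list y z) / 2 ^ n"
proof -
  have sqrt2: "sqrt 2 ^ n * sqrt 2 ^ n = (2::real) ^ n"
    by (simp add: power_mult_distrib[symmetric])
  have left: "op_mult n (hadamard_tensor n) (phase_diag n) y x
      = inner_sign y x / sqrt 2 ^ n * path_phase x" if x: "length x = n" for x
  proof -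
    have "phase_diag n x x = path_phase x"
      using minus_one_power_path_sum[of x] x by (simp add: phase_diag_def)
    then have "op_mult n (hadamard_tensor n) (phase_diag n) y x
        = (\<Sum>x'\<in>bitstrings n. if x' = x then hadamard_tensor n y x * path_phase x else 0)"
      unfolding op_mult_def by (intro sum.cong) (auto simp: phase_diag_def)
    then show ?thesis
      using x y by (simp add: hadamard_tensor_eq)
  qed
  have "R_op n y z = (\<Sum>x\<in>bitstrings n. path_phase x * inner_sign (xor_list y z) x / 2 ^ n)"
    unfolding R_op_def op_mult_def[of n _ "hadamard_tensor n"]
    using y z sqrt2
    by (intro sum.cong) (simp_all add: left hadamard_tensor_eq inner_sign_commute[of _ z]
        inner_sign_mult[symmetric])
  then show ?thesis
    using y z by (simp add: walsh_path_def sum_divide_distrib)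
qed

lemma R_op_even:
  assumes "length y = 2 * k" and "length z = 2 * k"
  shows "R_op (2 * k) y z = bool_sign (path_sign (xor_list y z)) / 2 ^ k"
  using assms
  by (simp add: R_op_eq_walsh_path walsh_path_even_length power_add mult_2 del: mult_2_right)

lemma card_row_R_op:
  assumes y: "length y = 2 * k"
  shows "real (card {z\<in>bitstrings (2 * k). R_op (2 * k) y z > 0}) = (2 ^ (2 * k) + 2 ^ k) / 2"
    and "real (card {z\<in>bitstrings (2 * k). R_op (2 * k) y z < 0}) = (2 ^ (2 * k) - 2 ^ k) / 2"
proof -
  have "{z\<in>bitstrings (2 * k). R_op (2 * k) y z > 0}
      = {z\<in>bitstrings (2 * k). \<not> path_sign (xor_list y z)}"
   and "{z\<in>bitstrings (2 * k). R_op (2 * k) y z < 0}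
      = {z\<in>bitstrings (2 * k). path_sign (xor_list y z)}"
    using y by (auto simp: R_op_even bool_sign_def split: if_splits)
  then show "real (card {z\<in>bitstrings (2 * k). R_op (2 * k) y z > 0}) = (2 ^ (2 * k) + 2 ^ k) / 2"
    and "real (card {z\<in>bitstrings (2 * k). R_op (2 * k) y z < 0}) = (2 ^ (2 * k) - 2 ^ k) / 2"
    by (simp_all only: card_xor_list_translate[OF y, of "\<lambda>w. \<not> path_sign w"]
        card_xor_list_translate[OF y, of path_sign] card_path_sign)
qed

theorem mainTheorem2:
  fixes n :: nat
  assumes "n > 0" and "even n"
  shows "(\<forall>y\<in>bitstrings n. \<forall>z\<in>bitstrings n. \<bar>R_op n y z\<bar> = 2 powr (- real n / 2))
       \<and> (\<forall>y\<in>bitstrings n.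
            real (card {z\<in>bitstrings n. R_op n y z > 0}) = (2 ^ n + 2 powr (real n / 2)) / 2
          \<and> real (card {z\<in>bitstrings n. R_op n y z < 0}) = (2 ^ n - 2 powr (real n / 2)) / 2)"
proof -
  obtain k where n: "n = 2 * k"
    using assms(2) by blast
  have "2 powr (real n / 2) = 2 ^ k" and "2 powr (- real n / 2) = 1 / 2 ^ k"
    by (simp_all add: n powr_minus_divide powr_realpow)
  then show ?thesis
    using card_row_R_op[of _ k] by (auto simp: n R_op_even bool_sign_def)
qed

end
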